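(* Let $(X,\tau)$ be a topological space with an operation $\gamma$ on $\tau$. If $A$ is $\gamma^{*}$-semi-open and $A\subseteq B\subseteq X$, then $A\subseteq cl_\gamma(int_\gamma(B))$.
   Context: An operation on $\tau$ is a map $\gamma:\tau\to P(X)$, $V\mapsto V^\gamma$, with $V\subseteq V^\gamma$ for every $V\in\tau$. For $A\subseteq X$, $int_\gamma(A)=\{x\in A: \text{there is an open } N \text{ with } x\in N,\ N^\gamma\subseteq A\}$; $A$ is $\gamma$-open iff $A=int_\gamma(A)$. $cl_\gamma(A)$ is the set of $x\in X$ such that $U^\gamma\cap A\neq\emptyset$ for every open $U\ni x$. $A$ is $\gamma^{*}$-semi-open if there is a $\gamma$-open set $O$ with $O\subseteq A\subseteq cl_\gamma(O)$. *)

theory Defs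
  imports "HOL-Analysis.Analysis"
begin

text \<open>An operation on the open sets of a topology T: a map g with V \<subseteq> g V for every open V.
  Values of g on non-open sets are irrelevant.\<close>
definition operation_on :: "'a topology \<Rightarrow> ('a set \<Rightarrow> 'a set) \<Rightarrow> bool" where
  "operation_on T g \<longleftrightarrow> (\<forall>V. openin T V \<longrightarrow> V \<subseteq> g V)"

definition gamma_int :: "'a topology \<Rightarrow> ('a set \<Rightarrow> 'a set) \<Rightarrow> 'a set \<Rightarrow> 'a set" where
  "gamma_int T g A = {x \<in> A. \<exists>N. openin T N \<and> x \<in> N \<and> g N \<subseteq> A}"

definition gamma_open :: "'a topology \<Rightarrow> ('a set \<Rightarrow> 'a set) \<Rightarrow> 'a set \<Rightarrow> bool" where
  "gamma_open T g A \<longleftrightarrow> A = gamma_int T g A"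

definition gamma_cl :: "'a topology \<Rightarrow> ('a set \<Rightarrow> 'a set) \<Rightarrow> 'a set \<Rightarrow> 'a set" where
  "gamma_cl T g A = {x \<in> topspace T. \<forall>U. openin T U \<and> x \<in> U \<longrightarrow> g U \<inter> A \<noteq> {}}"

definition gamma_star_semi_open :: "'a topology \<Rightarrow> ('a set \<Rightarrow> 'a set) \<Rightarrow> 'a set \<Rightarrow> bool" where
  "gamma_star_semi_open T g A \<longleftrightarrow> (\<exists>W. gamma_open T g W \<and> W \<subseteq> A \<and> A \<subseteq> gamma_cl T g W)"

end

theory Submission
  imports Defs
begin

(* A gamma-open set W witnessing semi-openness of A lies in B, hence in int_gamma(B) by
   monotonicity of int_gamma; monotonicity of cl_gamma then gives
   A <= cl_gamma(W) <= cl_gamma(int_gamma(B)). *)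

lemma gamma_int_mono:
  assumes "A \<subseteq> B"
  shows "gamma_int T g A \<subseteq> gamma_int T g B"
  using assms unfolding gamma_int_def by blast

lemma gamma_cl_mono:
  assumes "A \<subseteq> B"
  shows "gamma_cl T g A \<subseteq> gamma_cl T g B"
  using assms unfolding gamma_cl_def by blast

lemma gamma_open_subset_gamma_int:
  assumes "gamma_open T g W" and "W \<subseteq> B"
  shows "W \<subseteq> gamma_int T g B"
proof -
  have "W = gamma_int T g W"
    using assms(1) unfolding gamma_open_def .
  also have "\<dots> \<subseteq> gamma_int T g B"
    using assms(2) by (rule gamma_int_mono)
  finally show ?thesis .
qed

theorem lemma4p4:
  fixes T :: "'a topology" and g :: "'a set \<Rightarrow> 'a set" and A B :: "'a set"
  assumes "operation_on T g"
    and "gamma_star_semi_open T g A"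
    and "A \<subseteq> B" and "B \<subseteq> topspace T"
  shows "A \<subseteq> gamma_cl T g (gamma_int T g B)"
proof -
  obtain W where W: "gamma_open T g W" "W \<subseteq> A" "A \<subseteq> gamma_cl T g W"
    using assms(2) unfolding gamma_star_semi_open_def by blast
  have "W \<subseteq> gamma_int T g B"
    using W(1) gamma_open_subset_gamma_int W(2) assms(3) by blast
  then have "gamma_cl T g W \<subseteq> gamma_cl T g (gamma_int T g B)"
    by (rule gamma_cl_mono)
  with W(3) show ?thesis by blast
qed

end
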